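(* Let $C_2\subseteq C_1\subseteq\mathbb F_2^n$ be binary linear codes. Then $(C_1,C_2)$ is a binary CSS-$T$ pair if and only if $C_1\star C_1\subseteq C_2^\perp$.
   Context: $\langle x,y\rangle=\sum_i x_iy_i$ is the standard inner product on $\mathbb F_2^n$ and $C^\perp$ the dual code. For $a,b\in\mathbb F_2^n$, $a\star b=(a_1b_1,\dots,a_nb_n)$, and for codes $A,B$, $A\star B=\mathrm{span}\{a\star b:a\in A,b\in B\}$. The Hamming weight $\omega^{\mathrm H}(x)$ is the number of nonzero coordinates of $x$. A pair of binary linear codes $(C_1,C_2)$ with $C_2\subseteq C_1\subseteq\mathbb F_2^n$ is a binary CSS-$T$ pair if (i) $C_2$ is even, i.e. every $x\in C_2$ has even Hamming weight, and (ii) for every $x\in C_2$ there exists a linear code $C_x\subseteq C_1^\perp$ of dimension $\omega^{\mathrm H}(x)/2$ which is supported on $x$ (every $y\in C_x$ has $y_i=0$ whenever $x_i=0$) and is self-dual when regarded as a code of length $\omega^{\mathrm H}(x)$ on the support of $x$. *)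

theory Defs
  imports "HOL-Analysis.Analysis" "HOL-Library.Z2"
begin

definition bin_inner :: "bit ^ 'n \<Rightarrow> bit ^ 'n \<Rightarrow> bit" where
  "bin_inner x y = (\<Sum>i\<in>UNIV. x $ i * y $ i)"

definition dual_code :: "(bit ^ 'n) set \<Rightarrow> (bit ^ 'n) set" where
  "dual_code C = {y. \<forall>x\<in>C. bin_inner x y = 0}"

definition star_vec :: "bit ^ 'n \<Rightarrow> bit ^ 'n \<Rightarrow> bit ^ 'n" where
  "star_vec a b = (\<chi> i. a $ i * b $ i)"

definition star_code :: "(bit ^ 'n) set \<Rightarrow> (bit ^ 'n) set \<Rightarrow> (bit ^ 'n) set" where
  "star_code A B = vec.span {star_vec a b | a b. a \<in> A \<and> b \<in> B}"

definition hweight :: "bit ^ 'n \<Rightarrow> nat" where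
  "hweight x = card {i. x $ i \<noteq> 0}"

definition linear_code :: "(bit ^ 'n) set \<Rightarrow> bool" where
  "linear_code C \<longleftrightarrow> vec.subspace C"

definition even_code :: "(bit ^ 'n) set \<Rightarrow> bool" where
  "even_code C \<longleftrightarrow> (\<forall>x\<in>C. even (hweight x))"

definition supported_on :: "(bit ^ 'n) set \<Rightarrow> bit ^ 'n \<Rightarrow> bool" where
  "supported_on D x \<longleftrightarrow> (\<forall>y\<in>D. \<forall>i. x $ i = 0 \<longrightarrow> y $ i = 0)"

text \<open>Self-duality of D as a code of length wt(x) on the support of x:
  D equals the set of vectors supported on x that are orthogonal to all of D
  (the dual of D inside F_2^{supp x}).\<close>
definition self_dual_on_support :: "(bit ^ 'n) set \<Rightarrow> bit ^ 'n \<Rightarrow> bool" where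
  "self_dual_on_support D x \<longleftrightarrow>
     D = {y. (\<forall>i. x $ i = 0 \<longrightarrow> y $ i = 0) \<and> (\<forall>z\<in>D. bin_inner z y = 0)}"

definition CSS_T_pair :: "(bit ^ 'n) set \<Rightarrow> (bit ^ 'n) set \<Rightarrow> bool" where
  "CSS_T_pair C1 C2 \<longleftrightarrow>
     even_code C2 \<and>
     (\<forall>x\<in>C2. \<exists>Cx. linear_code Cx \<and> Cx \<subseteq> dual_code C1 \<and>
        vec.dim Cx = hweight x div 2 \<and> supported_on Cx x \<and> self_dual_on_support Cx x)"

end

theory Submission
  imports Defs
begin

(* For x in C2 put A_x = x * C1, a subspace of the vectors supported on x. Since
   <x, a * b> = <x * a, x * b>, the condition C1 * C1 <= C2^perp says exactly that every A_x is
   self-orthogonal, and on vectors supported on x the conditions "orthogonal to C1" and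
   "orthogonal to A_x" coincide. Hence a self-dual C_x inside C1^perp must contain A_x, which is
   therefore self-orthogonal. Conversely, A_x contains x = x * x, so wt(x) = <x, x> is even, and a
   self-orthogonal subspace of F_2^{supp x} extends to a self-dual one: as long as its dimension is
   below wt(x)/2, the dimension formula dim (A^perp) + dim A = wt(x) yields a vector v outside A
   orthogonal to A and to x, and <v, v> = <x, v> = 0, so A + <v> is again self-orthogonal. *)

(* Z2 rewrites + and * on bit to XOR and AND, which blocks ring normalisation. *)
declare add_bit_eq_xor [simp del] mult_bit_eq_and [simp del]

definition support_space :: "bit ^ 'n \<Rightarrow> (bit ^ 'n) set" where
  "support_space x = {y. \<forall>i. x $ i = 0 \<longrightarrow> y $ i = 0}"

lemma supported_on_iff: "supported_on D x \<longleftrightarrow> D \<subseteq> support_space x"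
  by (auto simp: supported_on_def support_space_def)

lemma self_dual_on_support_iff:
  "self_dual_on_support D x \<longleftrightarrow> D = support_space x \<inter> dual_code D"
  by (simp add: self_dual_on_support_def support_space_def dual_code_def Int_def)

lemma bit_mult_self [simp]: "(b :: bit) * b = b"
  by (cases b) simp_all

lemma bit_add_eq_0_iff [simp]: "(a :: bit) + b = 0 \<longleftrightarrow> a = b"
  by (cases a; cases b) simp_all

lemma of_nat_bit_eq_0_iff: "(of_nat n :: bit) = 0 \<longleftrightarrow> even n"
  by (induction n) (auto simp: add_bit_eq_xor)

lemma bin_inner_commute: "bin_inner a b = bin_inner b a"
  by (simp add: bin_inner_def mult.commute)

lemma bin_inner_add_right: "bin_inner y (a + b) = bin_inner y a + bin_inner y b"
  by (simp add: bin_inner_def sum.distrib algebra_simps)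

lemma bin_inner_diff_right: "bin_inner y (a - b) = bin_inner y a - bin_inner y b"
  by (simp add: bin_inner_def sum.distrib algebra_simps)

lemma bin_inner_diff_left: "bin_inner (a - b) y = bin_inner a y - bin_inner b y"
  by (simp add: bin_inner_def sum.distrib algebra_simps)

lemma bin_inner_scale_right: "bin_inner y (c *s a) = c * bin_inner y a"
  by (simp add: bin_inner_def sum_distrib_left algebra_simps)

lemma bin_inner_scale_left: "bin_inner (c *s a) y = c * bin_inner a y"
  by (simp add: bin_inner_def sum_distrib_left algebra_simps)

lemma bin_inner_axis_left: "bin_inner (axis i 1) a = a $ i"
proof -
  have "bin_inner (axis i 1) a = (\<Sum>j\<in>UNIV. if j = i then a $ j else 0)"
    unfolding bin_inner_def axis_def by (rule sum.cong) auto
  then show ?thesis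
    by simp
qed

lemma bin_inner_self: "bin_inner x x = of_nat (hweight x)"
proof -
  have "bin_inner x x = (\<Sum>i\<in>UNIV. of_bool (x $ i \<noteq> 0))"
    unfolding bin_inner_def by (rule sum.cong) auto
  then show ?thesis
    by (simp add: hweight_def)
qed

lemma bin_inner_self_support: "y \<in> support_space x \<Longrightarrow> bin_inner y y = bin_inner x y"
  unfolding bin_inner_def support_space_def by (rule sum.cong) auto

lemma bin_inner_zero_right [simp]: "bin_inner y 0 = 0"
  by (simp add: bin_inner_def)

lemma subspace_dual_code: "vec.subspace (dual_code C)"
  by (auto simp: vec.subspace_def dual_code_def bin_inner_add_right bin_inner_scale_right)

lemma dual_code_antimono: "A \<subseteq> B \<Longrightarrow> dual_code B \<subseteq> dual_code A"
  by (auto simp: dual_code_def)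

lemma dual_code_insert: "dual_code (insert b B) = {y \<in> dual_code B. bin_inner b y = 0}"
  by (auto simp: dual_code_def)

lemma subset_dual_code_commute: "A \<subseteq> dual_code B \<longleftrightarrow> B \<subseteq> dual_code A"
  unfolding dual_code_def subset_iff mem_Collect_eq by (metis bin_inner_commute)

lemma dual_code_span: "dual_code (vec.span B) = dual_code B"
proof
  show "dual_code (vec.span B) \<subseteq> dual_code B"
    by (rule dual_code_antimono[OF vec.span_superset])
  have "B \<subseteq> dual_code (dual_code B)"
    using subset_dual_code_commute by blast
  then have "vec.span B \<subseteq> dual_code (dual_code B)"
    by (rule vec.span_minimal[OF _ subspace_dual_code])
  then show "dual_code B \<subseteq> dual_code (vec.span B)"
    using subset_dual_code_commute by blast
qed

lemma dual_code_spanning_subset: "B \<subseteq> A \<Longrightarrow> A \<subseteq> vec.span B \<Longrightarrow> dual_code A = dual_code B"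
  using dual_code_antimono dual_code_span by (metis subset_antisym)

lemma self_orthogonal_span: "S \<subseteq> dual_code S \<Longrightarrow> vec.span S \<subseteq> dual_code (vec.span S)"
  unfolding dual_code_span by (rule vec.span_minimal[OF _ subspace_dual_code])

lemma subspace_support_space: "vec.subspace (support_space x)"
  by (auto simp: vec.subspace_def support_space_def)

lemma dim_support_space: "vec.dim (support_space x) = hweight x"
proof -
  let ?S = "{i. x $ i \<noteq> 0}"
  let ?B = "(\<lambda>i. axis i (1 :: bit)) ` ?S"
  have indep: "vec.independent ?B"
    by (rule vec.independent_mono[OF independent_cart_basis]) (auto simp: cart_basis_def)
  have "?B \<subseteq> support_space x"
    by (auto simp: support_space_def axis_def)
  moreover have "support_space x \<subseteq> vec.span ?B"
  proof
    fix y assume y: "y \<in> support_space x"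
    have "y = (\<Sum>i\<in>?S. y $ i *s axis i 1)"
      using y by (auto simp: vec_eq_iff sum_component axis_def support_space_def if_distrib
          cong: if_cong)
    also have "\<dots> \<in> vec.span ?B"
      by (intro vec.span_sum vec.span_scale vec.span_base) auto
    finally show "y \<in> vec.span ?B" .
  qed
  moreover have "card ?B = hweight x"
    by (simp add: hweight_def card_image inj_on_def axis_eq_axis)
  ultimately show ?thesis
    using vec.basis_card_eq_dim[OF _ _ indep] by simp
qed

lemma subspace_support_space_Int_dual_code: "vec.subspace (support_space x \<inter> dual_code B)"
  by (simp add: vec.subspace_inter subspace_support_space subspace_dual_code)

lemma hyperplane_projection_mem:
  assumes "vec.subspace P" "y \<in> P" "y0 \<in> P" "bin_inner b y0 = 1"
  shows "y - bin_inner b y *s y0 \<in> {z \<in> P. bin_inner b z = 0}"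
  using assms by (simp add: vec.subspace_diff vec.subspace_scale bin_inner_diff_right
      bin_inner_scale_right)

lemma dim_le_dim_hyperplane_Suc:
  assumes P: "vec.subspace P"
  shows "vec.dim P \<le> vec.dim {y \<in> P. bin_inner b y = 0} + 1"
proof (cases "\<forall>y\<in>P. bin_inner b y = 0")
  case True
  then have "{y \<in> P. bin_inner b y = 0} = P"
    by auto
  then show ?thesis
    by simp
next
  case False
  then obtain y0 where y0: "y0 \<in> P" "bin_inner b y0 = 1"
    by auto
  let ?H = "{y \<in> P. bin_inner b y = 0}"
  have "P \<subseteq> vec.span (insert y0 ?H)"
  proof
    fix y assume "y \<in> P"
    let ?c = "bin_inner b y"
    have "(y - ?c *s y0) + ?c *s y0 \<in> vec.span (insert y0 ?H)"
      using hyperplane_projection_mem[OF P \<open>y \<in> P\<close> y0]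
      by (meson insertI1 insertI2 vec.span_add vec.span_base vec.span_scale)
    then show "y \<in> vec.span (insert y0 ?H)"
      by simp
  qed
  then have "vec.dim P \<le> vec.dim (insert y0 ?H)"
    by (rule vec.dim_mono)
  also have "\<dots> \<le> vec.dim ?H + 1"
    by (simp add: vec.dim_insert)
  finally show ?thesis .
qed

lemma dual_code_hyperplane_correction:
  assumes P: "vec.subspace P" and y0: "y0 \<in> P" "bin_inner b y0 = 1"
    and a: "a \<in> dual_code {y \<in> P. bin_inner b y = 0}"
  shows "a - bin_inner a y0 *s b \<in> dual_code P"
  unfolding dual_code_def
proof (intro CollectI ballI)
  fix y assume "y \<in> P"
  let ?y' = "y - bin_inner b y *s y0"
  have "bin_inner ?y' a = 0"
    using hyperplane_projection_mem[OF P \<open>y \<in> P\<close> y0] a by (simp add: dual_code_def)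
  then have "bin_inner a y = bin_inner b y * bin_inner a y0"
    by (simp add: bin_inner_commute[of ?y' a] bin_inner_diff_right bin_inner_scale_right)
  then show "bin_inner y (a - bin_inner a y0 *s b) = 0"
    by (simp add: bin_inner_commute[of y] bin_inner_diff_left bin_inner_scale_left mult.commute)
qed

(* Nondegeneracy of the inner product on the vectors supported on x. *)
lemma support_double_dual_subset_span:
  assumes "finite B" "B \<subseteq> support_space x"
  shows "support_space x \<inter> dual_code (support_space x \<inter> dual_code B) \<subseteq> vec.span B"
  using assms
proof (induction B rule: finite_induct)
  case empty
  have "a = 0" if a: "a \<in> support_space x \<inter> dual_code (support_space x)" for a
  proof (rule vec_eq_iff[THEN iffD2], intro allI)
    fix i
    show "a $ i = 0 $ i"
    proof (cases "x $ i = 0")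
      case True
      then show ?thesis using a by (simp add: support_space_def)
    next
      case False
      then have "axis i 1 \<in> support_space x"
        by (auto simp: support_space_def axis_def)
      then show ?thesis
        using a by (auto simp: dual_code_def bin_inner_axis_left)
    qed
  qed
  then show ?case
    by (auto simp: dual_code_def vec.span_zero)
next
  case (insert b B)
  let ?P = "support_space x \<inter> dual_code B"
  have subspace_P: "vec.subspace ?P"
    by (rule subspace_support_space_Int_dual_code)
  have b: "b \<in> support_space x" and IH: "support_space x \<inter> dual_code ?P \<subseteq> vec.span B"
    using insert by auto
  show ?case
  proof (cases "\<forall>y\<in>?P. bin_inner b y = 0")
    case True
    then have "support_space x \<inter> dual_code (insert b B) = ?P"
      by (auto simp: dual_code_insert)
    moreover have "vec.span B \<subseteq> vec.span (insert b B)"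
      by (rule vec.span_mono) blast
    ultimately show ?thesis
      using IH by auto
  next
    case False
    then obtain y0 where y0: "y0 \<in> ?P" "bin_inner b y0 = 1"
      by auto
    show ?thesis
    proof
      fix a assume a: "a \<in> support_space x \<inter> dual_code (support_space x \<inter> dual_code (insert b B))"
      let ?a' = "a - bin_inner a y0 *s b"
      have "support_space x \<inter> dual_code (insert b B) = {y \<in> ?P. bin_inner b y = 0}"
        by (auto simp: dual_code_insert)
      then have "?a' \<in> dual_code ?P"
        using dual_code_hyperplane_correction[OF subspace_P y0] a by simp
      moreover have "?a' \<in> support_space x"
        using a b by (meson IntD1 subspace_support_space vec.subspace_diff vec.subspace_scale)
      ultimately have "?a' \<in> vec.span B"
        using IH by blast
      then have "?a' + bin_inner a y0 *s b \<in> vec.span (insert b B)"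
        by (meson insertI1 subsetD subset_insertI vec.span_add vec.span_base vec.span_mono
            vec.span_scale)
      then show "a \<in> vec.span (insert b B)"
        by simp
    qed
  qed
qed

lemma dim_dual_code_in_support_independent:
  assumes "vec.independent B" "B \<subseteq> support_space x"
  shows "vec.dim (support_space x \<inter> dual_code B) + card B = hweight x"
  using vec.finiteI_independent[OF assms(1)] assms
proof (induction B rule: finite_induct)
  case empty
  then show ?case
    by (simp add: dual_code_def dim_support_space)
next
  case (insert b B)
  let ?P = "support_space x \<inter> dual_code B"
  let ?P' = "support_space x \<inter> dual_code (insert b B)"
  have b: "b \<notin> vec.span B" and B: "vec.independent B" "B \<subseteq> support_space x"
    and "b \<in> support_space x"
    using insert.hyps insert.prems by (auto simp: vec.independent_insert)
  have hyperplane: "?P' = {y \<in> ?P. bin_inner b y = 0}"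
    by (auto simp: dual_code_insert)
  have subspace_P: "vec.subspace ?P"
    by (rule subspace_support_space_Int_dual_code)
  then have "vec.subspace ?P'"
    unfolding hyperplane by (auto simp: vec.subspace_def bin_inner_add_right bin_inner_scale_right)
  have "b \<notin> dual_code ?P"
    using support_double_dual_subset_span[OF insert.hyps(1) B(2)] b \<open>b \<in> support_space x\<close>
    by blast
  then obtain y0 where "y0 \<in> ?P" "bin_inner y0 b \<noteq> 0"
    by (auto simp: dual_code_def)
  then have "y0 \<in> ?P - ?P'"
    unfolding hyperplane by (simp add: bin_inner_commute[of b])
  then have "?P' \<subset> ?P"
    unfolding hyperplane by blast
  then have "vec.dim ?P' < vec.dim ?P"
    using vec.dim_psubset vec.span_eq_iff subspace_P \<open>vec.subspace ?P'\<close> by metis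
  moreover have "vec.dim ?P \<le> vec.dim ?P' + 1"
    unfolding hyperplane by (rule dim_le_dim_hyperplane_Suc[OF subspace_P])
  ultimately show ?case
    using insert.IH[OF B] insert.hyps by simp
qed

lemma dim_dual_code_in_support:
  assumes "A \<subseteq> support_space x"
  shows "vec.dim (support_space x \<inter> dual_code A) + vec.dim A = hweight x"
proof -
  obtain B where "B \<subseteq> A" "vec.independent B" "A \<subseteq> vec.span B" "card B = vec.dim A"
    by (rule vec.basis_exists)
  then show ?thesis
    using dim_dual_code_in_support_independent[of B x] dual_code_spanning_subset[of B A] assms by auto
qed

lemma self_dual_on_support_dim:
  assumes "D = support_space x \<inter> dual_code D"
  shows "2 * vec.dim D = hweight x"
  using dim_dual_code_in_support[of D x] assms by (metis Int_lower1 mult_2)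

lemma self_dual_on_support_if_half_dim:
  assumes "vec.subspace D" "D \<subseteq> support_space x" "D \<subseteq> dual_code D" "2 * vec.dim D = hweight x"
  shows "D = support_space x \<inter> dual_code D"
proof (rule vec.subspace_dim_equal)
  show "vec.subspace (support_space x \<inter> dual_code D)"
    by (rule subspace_support_space_Int_dual_code)
  show "vec.dim (support_space x \<inter> dual_code D) \<le> vec.dim D"
    using dim_dual_code_in_support[OF assms(2)] assms(4) by simp
qed (use assms in auto)

lemma self_orthogonal_dim_le:
  assumes "A \<subseteq> support_space x" "A \<subseteq> dual_code A"
  shows "2 * vec.dim A \<le> hweight x"
proof -
  have "vec.dim A \<le> vec.dim (support_space x \<inter> dual_code A)"
    using assms by (intro vec.dim_subset) auto
  then show ?thesis
    using dim_dual_code_in_support[OF assms(1)] by linarith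
qed

lemma self_orthogonal_extend_by_one:
  assumes A: "vec.subspace A" "A \<subseteq> support_space x" "A \<subseteq> dual_code A"
    and small: "2 * vec.dim A + 2 \<le> hweight x"
  shows "\<exists>A'. vec.subspace A' \<and> A \<subseteq> A' \<and> A' \<subseteq> support_space x \<and> A' \<subseteq> dual_code A' \<and>
           vec.dim A' = vec.dim A + 1"
proof -
  let ?P = "support_space x \<inter> dual_code A"
  let ?E = "support_space x \<inter> dual_code (insert x A)"
  have "?E = {y \<in> ?P. bin_inner x y = 0}"
    by (auto simp: dual_code_insert)
  then have "vec.dim ?P \<le> vec.dim ?E + 1"
    using dim_le_dim_hyperplane_Suc[OF subspace_support_space_Int_dual_code] by simp
  then have "\<not> ?E \<subseteq> A"
    using vec.dim_subset[of ?E A] dim_dual_code_in_support[OF A(2)] small by linarith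
  then obtain v where v: "v \<in> ?E" "v \<notin> A"
    by blast
  have v_support: "v \<in> support_space x" and "bin_inner x v = 0" and "v \<in> dual_code A"
    using v(1) by (auto simp: dual_code_insert)
  then have "bin_inner v v = 0"
    by (simp add: bin_inner_self_support)
  moreover have "A \<subseteq> dual_code {v}"
    using \<open>v \<in> dual_code A\<close> subset_dual_code_commute[of A "{v}"] by simp
  ultimately have "insert v A \<subseteq> dual_code (insert v A)"
    using \<open>v \<in> dual_code A\<close> A(3) by (auto simp: dual_code_insert)
  then have "vec.span (insert v A) \<subseteq> dual_code (vec.span (insert v A))"
    by (rule self_orthogonal_span)
  moreover have "A \<subseteq> vec.span (insert v A)"
    by (meson subset_insertI subset_trans vec.span_superset)
  moreover have "vec.span (insert v A) \<subseteq> support_space x"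
    using v_support A(2) by (intro vec.span_minimal subspace_support_space) auto
  moreover have "vec.dim (vec.span (insert v A)) = vec.dim A + 1"
    using v(2) A(1) by (simp add: vec.dim_insert vec.span_eq_iff[THEN iffD2])
  ultimately show ?thesis
    using vec.subspace_span by blast
qed

lemma self_orthogonal_extends_to_self_dual_on_support:
  assumes "even (hweight x)" "vec.subspace A" "A \<subseteq> support_space x" "A \<subseteq> dual_code A"
  shows "\<exists>D. A \<subseteq> D \<and> D = support_space x \<inter> dual_code D"
  using assms(2-)
proof (induction "hweight x - 2 * vec.dim A" arbitrary: A rule: less_induct)
  case less
  consider "2 * vec.dim A = hweight x" | "2 * vec.dim A + 2 \<le> hweight x"
    using self_orthogonal_dim_le[OF less.prems(2,3)] assms(1) by fastforce
  then show ?case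
  proof cases
    case 1
    then show ?thesis
      using self_dual_on_support_if_half_dim less.prems by blast
  next
    case 2
    then obtain A' where A': "vec.subspace A'" "A \<subseteq> A'" "A' \<subseteq> support_space x"
      "A' \<subseteq> dual_code A'" "vec.dim A' = vec.dim A + 1"
      using self_orthogonal_extend_by_one less.prems by blast
    then have "hweight x - 2 * vec.dim A' < hweight x - 2 * vec.dim A"
      using 2 by linarith
    then obtain D where "A' \<subseteq> D" and self_dual: "D = support_space x \<inter> dual_code D"
      using less.hyps[OF _ A'(1,3,4)] by blast
    have "A \<subseteq> D"
      using A'(2) \<open>A' \<subseteq> D\<close> by (rule order_trans)
    with self_dual show ?thesis
      by blast
  qed
qed

lemma star_vec_in_support_space: "star_vec x c \<in> support_space x"
  by (simp add: star_vec_def support_space_def)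

lemma star_vec_self: "star_vec x x = x"
  by (simp add: star_vec_def)

lemma bin_inner_star_vec_left:
  "y \<in> support_space x \<Longrightarrow> bin_inner (star_vec x c) y = bin_inner c y"
  unfolding bin_inner_def support_space_def star_vec_def by (rule sum.cong) auto

lemma bin_inner_star_vec: "bin_inner x (star_vec a b) = bin_inner (star_vec x a) (star_vec x b)"
  unfolding bin_inner_def star_vec_def by (rule sum.cong) (simp_all add: mult_ac)

lemma linear_star_vec: "Vector_Spaces.linear (*s) (*s) (star_vec x)"
  by unfold_locales (simp_all add: star_vec_def vec_eq_iff algebra_simps)

lemma support_space_Int_dual_code_star_image:
  "support_space x \<inter> dual_code (star_vec x ` C) = support_space x \<inter> dual_code C"
  by (auto simp: dual_code_def bin_inner_star_vec_left)

lemma star_code_subset_dual_code_iff: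
  "star_code A B \<subseteq> dual_code C \<longleftrightarrow> (\<forall>x\<in>C. star_vec x ` A \<subseteq> dual_code (star_vec x ` B))"
proof -
  have "star_code A B \<subseteq> dual_code C \<longleftrightarrow> {star_vec a b |a b. a \<in> A \<and> b \<in> B} \<subseteq> dual_code C"
    unfolding star_code_def using vec.span_minimal[OF _ subspace_dual_code] vec.span_superset
    by (meson order_trans)
  also have "\<dots> \<longleftrightarrow> (\<forall>x\<in>C. \<forall>a\<in>A. \<forall>b\<in>B. bin_inner x (star_vec a b) = 0)"
    by (auto simp: dual_code_def)
  also have "\<dots> \<longleftrightarrow> (\<forall>x\<in>C. \<forall>a\<in>A. \<forall>b\<in>B. bin_inner (star_vec x a) (star_vec x b) = 0)"
    by (simp only: bin_inner_star_vec[symmetric])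
  also have "\<dots> \<longleftrightarrow> (\<forall>x\<in>C. star_vec x ` B \<subseteq> dual_code (star_vec x ` A))"
    by (auto simp: dual_code_def)
  also have "\<dots> \<longleftrightarrow> (\<forall>x\<in>C. star_vec x ` A \<subseteq> dual_code (star_vec x ` B))"
    by (intro ball_cong refl subset_dual_code_commute)
  finally show ?thesis .
qed

lemma even_hweight_if_self_orthogonal_star:
  assumes "x \<in> C" "star_vec x ` C \<subseteq> dual_code (star_vec x ` C)"
  shows "even (hweight x)"
proof -
  have "x \<in> star_vec x ` C"
    using assms(1) star_vec_self by (metis image_eqI)
  then have "bin_inner x x = 0"
    using assms(2) unfolding dual_code_def by blast
  then show ?thesis
    by (simp add: bin_inner_self of_nat_bit_eq_0_iff)
qed

lemma star_image_subset_self_dual_on_support: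
  assumes "D \<subseteq> dual_code C" "D \<subseteq> support_space x" and self_dual: "D = support_space x \<inter> dual_code D"
  shows "star_vec x ` C \<subseteq> D"
proof -
  have "D \<subseteq> support_space x \<inter> dual_code (star_vec x ` C)"
    unfolding support_space_Int_dual_code_star_image using assms(2,1) by (rule Int_greatest)
  then have "star_vec x ` C \<subseteq> dual_code D"
    using subset_dual_code_commute[of "star_vec x ` C" D] by blast
  with star_vec_in_support_space have "star_vec x ` C \<subseteq> support_space x \<inter> dual_code D"
    by blast
  also note self_dual[symmetric]
  finally show ?thesis .
qed

lemma self_dual_on_support_in_dual_code_exists:
  assumes "linear_code C" "x \<in> C" and orth: "star_vec x ` C \<subseteq> dual_code (star_vec x ` C)"
  shows "\<exists>D. linear_code D \<and> D \<subseteq> dual_code C \<and> vec.dim D = hweight x div 2 \<and>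
           supported_on D x \<and> self_dual_on_support D x"
proof -
  let ?A = "star_vec x ` C"
  have "vec.subspace ?A"
    using assms(1) unfolding linear_code_def by (rule vec.linear_subspace_image[OF linear_star_vec])
  moreover have "?A \<subseteq> support_space x"
    using star_vec_in_support_space by blast
  ultimately obtain D where "?A \<subseteq> D" and self_dual: "D = support_space x \<inter> dual_code D"
    using self_orthogonal_extends_to_self_dual_on_support[OF
        even_hweight_if_self_orthogonal_star[OF assms(2) orth] _ _ orth]
    by blast
  have "D \<subseteq> support_space x \<inter> dual_code D"
    using self_dual by (rule equalityD1)
  also have "\<dots> \<subseteq> support_space x \<inter> dual_code ?A"
    using dual_code_antimono[OF \<open>?A \<subseteq> D\<close>] by blast
  also have "\<dots> = support_space x \<inter> dual_code C"
    by (rule support_space_Int_dual_code_star_image)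
  finally have D_sub: "D \<subseteq> support_space x \<inter> dual_code C" .
  show ?thesis
  proof (intro exI conjI)
    show "linear_code D"
      unfolding linear_code_def by (subst self_dual) (rule subspace_support_space_Int_dual_code)
    show "D \<subseteq> dual_code C" and "supported_on D x"
      using D_sub unfolding supported_on_iff by blast+
    show "vec.dim D = hweight x div 2"
      using self_dual_on_support_dim[OF self_dual] by simp
    show "self_dual_on_support D x"
      unfolding self_dual_on_support_iff by (rule self_dual)
  qed
qed

lemma self_dual_on_support_in_dual_code_exists_iff:
  assumes "linear_code C" "x \<in> C"
  shows "(\<exists>D. linear_code D \<and> D \<subseteq> dual_code C \<and> vec.dim D = hweight x div 2 \<and>
            supported_on D x \<and> self_dual_on_support D x)
         \<longleftrightarrow> star_vec x ` C \<subseteq> dual_code (star_vec x ` C)"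
proof
  assume "\<exists>D. linear_code D \<and> D \<subseteq> dual_code C \<and> vec.dim D = hweight x div 2 \<and>
            supported_on D x \<and> self_dual_on_support D x"
  then obtain D where "D \<subseteq> dual_code C" "supported_on D x" "self_dual_on_support D x"
    by blast
  have "D \<subseteq> support_space x"
    using \<open>supported_on D x\<close> unfolding supported_on_iff .
  have self_dual: "D = support_space x \<inter> dual_code D"
    using \<open>self_dual_on_support D x\<close> unfolding self_dual_on_support_iff .
  have "star_vec x ` C \<subseteq> D"
    using \<open>D \<subseteq> dual_code C\<close> \<open>D \<subseteq> support_space x\<close> self_dual
    by (rule star_image_subset_self_dual_on_support)
  also have "D \<subseteq> dual_code D"
    using equalityD1[OF self_dual] by blast
  also have "\<dots> \<subseteq> dual_code (star_vec x ` C)"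
    using \<open>star_vec x ` C \<subseteq> D\<close> by (rule dual_code_antimono)
  finally show "star_vec x ` C \<subseteq> dual_code (star_vec x ` C)" .
qed (rule self_dual_on_support_in_dual_code_exists[OF assms])

theorem mainTheorem2:
  fixes C1 C2 :: "(bit ^ 'n) set"
  assumes "linear_code C1" and "linear_code C2" and "C2 \<subseteq> C1"
  shows "CSS_T_pair C1 C2 \<longleftrightarrow> star_code C1 C1 \<subseteq> dual_code C2"
proof -
  (* Both sides are conditions on each x in C2 separately. *)
  let ?self_orthogonal = "\<lambda>x. star_vec x ` C1 \<subseteq> dual_code (star_vec x ` C1)"
  have "CSS_T_pair C1 C2 \<longleftrightarrow> (\<forall>x\<in>C2. ?self_orthogonal x)"
    unfolding CSS_T_pair_def even_code_def
    using self_dual_on_support_in_dual_code_exists_iff[OF assms(1)]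
      even_hweight_if_self_orthogonal_star[of _ C1] assms(3)
    by blast
  also have "\<dots> \<longleftrightarrow> star_code C1 C1 \<subseteq> dual_code C2"
    by (rule star_code_subset_dual_code_iff[symmetric])
  finally show ?thesis .
qed

end
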